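(* Let $U\subseteq\mathbb{C}_{xy}$ be a $q$-open subset. Then $U$ is a Runge $q$-open subset if and only if the image of $\mathfrak{A}_q$ is dense in $\mathcal{F}_q(U)$.
   Context: Fix $q\in\mathbb{C}$ with $0<|q|<1$; $\mathfrak{A}_q$ is generated by $x,y$ with $xy=q^{-1}yx$. $V\subseteq\mathbb{C}$ is $q$-open if it is open, contains $0$ and $qV\subseteq V$. A $q$-open subset of $\mathbb{C}_{xy}=(\mathbb{C}\times\{0\})\cup(\{0\}\times\mathbb{C})$ is $U=U_x\cup U_y$ with $U_x$, $U_y$ $q$-open subsets of the coordinate lines (coordinates $z$, $w$); it is Runge $q$-open if every connected component of $U_x$ and of $U_y$ is simply connected (equivalently, polynomials are dense in $\mathcal{O}(U_x)$ and $\mathcal{O}(U_y)$). $\mathcal{F}_q(U)=\{(f,g)\in\mathcal{O}(U_x)[[y]]\oplus[[x]]\mathcal{O}(U_y):f_k^{(i)}(0)/i!=g_i^{(k)}(0)/k!\ \forall i,k\ge0\}$, where $\mathcal{O}(U_x)[[y]]$ is the Fréchet space of series $\sum_nf_n(z)y^n$, $f_n\in\mathcal{O}(U_x)$, with product topology and multiplication $f\cdot g=\sum_n(\sum_{i+j=n}f_i(z)g_j(q^iz))y^n$, and $[[x]]\mathcal{O}(U_y)$ the analogous space of series $\sum x^nf_n(w)$ with multiplication $\sum_nx^n\sum_{i+j=n}f_i(q^jw)g_j(w)$. The map $\mathfrak{A}_q\to\mathcal{F}_q(U)$ sends $\sum a_{ik}x^iy^k$ to $\big(\sum_k(\sum_ia_{ik}z^i)y^k,\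 \sum_ix^i(\sum_ka_{ik}w^k)\big)$. *)

theory Defs
  imports "HOL-Analysis.Analysis"
begin

definition q_open :: "complex \<Rightarrow> complex set \<Rightarrow> bool" where
  "q_open q V \<longleftrightarrow> open V \<and> 0 \<in> V \<and> (\<lambda>z. q * z) ` V \<subseteq> V"

definition runge_set :: "complex set \<Rightarrow> bool" where
  "runge_set V \<longleftrightarrow> (\<forall>C \<in> components V. simply_connected C)"

text \<open>A q-open subset U = U_x \<union> U_y of C_xy (given by its two pieces) is Runge.\<close>
definition runge_q_open :: "complex set \<Rightarrow> complex set \<Rightarrow> bool" where
  "runge_q_open Ux Uy \<longleftrightarrow> runge_set Ux \<and> runge_set Uy"

text \<open>The underlying set of F_q(U): pairs (f,g), f = sum f_n(z) y^n with f_n holomorphic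
  on U_x, g = sum x^n g_n(w) with g_n holomorphic on U_y, satisfying the compatibility
  condition f_k^(i)(0)/i! = g_i^(k)(0)/k!.\<close>
definition Fq :: "complex set \<Rightarrow> complex set \<Rightarrow>
    ((nat \<Rightarrow> complex \<Rightarrow> complex) \<times> (nat \<Rightarrow> complex \<Rightarrow> complex)) set" where
  "Fq Ux Uy = {(f, g). (\<forall>n. f n holomorphic_on Ux) \<and> (\<forall>n. g n holomorphic_on Uy) \<and>
      (\<forall>i k. (deriv ^^ i) (f k) 0 / of_nat (fact i) = (deriv ^^ k) (g i) 0 / of_nat (fact k))}"

text \<open>Image of the element sum_{i,k \<le> D} a i k x^i y^k of A_q in F_q(U):
  the coefficient of y^k of the first component, and of x^i of the second component.\<close>
definition img_x :: "nat \<Rightarrow> (nat \<Rightarrow> nat \<Rightarrow> complex) \<Rightarrow> nat \<Rightarrow> complex \<Rightarrow> complex" where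
  "img_x D a k z = (if k \<le> D then (\<Sum>i\<le>D. a i k * z ^ i) else 0)"

definition img_y :: "nat \<Rightarrow> (nat \<Rightarrow> nat \<Rightarrow> complex) \<Rightarrow> nat \<Rightarrow> complex \<Rightarrow> complex" where
  "img_y D a i w = (if i \<le> D then (\<Sum>k\<le>D. a i k * w ^ k) else 0)"

text \<open>Density of the image of A_q in F_q(U), where O(U_x)[[y]] \<oplus> [[x]]O(U_y) carries the
  product of the Frechet topologies of locally uniform convergence: every basic neighbourhood
  (finitely many coefficients, a compact set in each line, a radius) of every point of
  F_q(U) meets the image.\<close>
definition image_dense :: "complex set \<Rightarrow> complex set \<Rightarrow> bool" where
  "image_dense Ux Uy \<longleftrightarrow>
     (\<forall>f g. (f, g) \<in> Fq Ux Uy \<longrightarrow>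
        (\<forall>N K L (\<epsilon>::real). compact K \<and> K \<subseteq> Ux \<and> compact L \<and> L \<subseteq> Uy \<and> \<epsilon> > 0 \<longrightarrow>
           (\<exists>D a. (\<forall>k\<le>N. \<forall>z\<in>K. norm (f k z - img_x D a k z) < \<epsilon>) \<and>
                  (\<forall>i\<le>N. \<forall>w\<in>L. norm (g i w - img_y D a i w) < \<epsilon>))))"

end

theory Submission
  imports Defs "HOL-Complex_Analysis.Complex_Analysis"
begin

(* For a single open set V, polynomials are dense in O(V) exactly when every component of V is
   simply connected. If they are (Runge's theorem: a Riemann map of each component, the Cauchy
   formula on a circle, Riemann sums of the Cauchy integral and pole pushing in the complement of
   a compact set with connected complement), every coefficient f_k on U_x and g_i on U_y is a
   uniform limit of polynomials on compacta; Cauchy estimates at 0 allow us to correct the first N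
   Taylor coefficients to the values prescribed by the compatibility condition, and then the two
   families of polynomials are read off from one element of A_q.
   Conversely, if a component C is not simply connected, a holomorphic function on C with nonzero
   integral along a closed path in C, extended by 0, is not a uniform limit of polynomials near
   that path; paired with its own Taylor coefficients it is an element of F_q(U) that the image of
   A_q does not approach. *)

section \<open>Uniform polynomial approximation on compact sets\<close>

definition poly_approximable :: "complex set \<Rightarrow> (complex \<Rightarrow> complex) \<Rightarrow> bool" where
  "poly_approximable S h \<longleftrightarrow> (\<forall>e>0. \<exists>p. \<forall>z\<in>S. norm (h z - poly p z) < e)"

lemma poly_approximable_poly: "poly_approximable S (poly p)"
  unfolding poly_approximable_def by (intro allI impI exI[of _ p]) auto

lemma poly_approximable_eq:
  "poly_approximable S h \<Longrightarrow> (\<And>z. z \<in> S \<Longrightarrow> h z = h' z) \<Longrightarrow> poly_approximable S h'"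
  unfolding poly_approximable_def by auto

lemma poly_approximable_const: "poly_approximable S (\<lambda>z. c)"
  by (rule poly_approximable_eq[OF poly_approximable_poly[of S "[:c:]"]]) simp

lemma poly_approximable_ident: "poly_approximable S (\<lambda>z. z)"
  by (rule poly_approximable_eq[OF poly_approximable_poly[of S "[:0, 1:]"]]) simp

lemma poly_approximable_subset: "poly_approximable S h \<Longrightarrow> T \<subseteq> S \<Longrightarrow> poly_approximable T h"
  unfolding poly_approximable_def by blast

lemma poly_approximable_uniform_limit:
  assumes "\<And>e. e > 0 \<Longrightarrow> \<exists>h'. poly_approximable S h' \<and> (\<forall>z\<in>S. norm (h z - h' z) \<le> e)"
  shows "poly_approximable S h"
  unfolding poly_approximable_def
proof (intro allI impI)
  fix e :: real assume "e > 0"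
  then obtain h' where "poly_approximable S h'" and h': "\<forall>z\<in>S. norm (h z - h' z) \<le> e/2"
    using assms[of "e/2"] by auto
  moreover have "e/2 > 0" using \<open>e > 0\<close> by simp
  ultimately obtain p where p: "\<forall>z\<in>S. norm (h' z - poly p z) < e/2"
    unfolding poly_approximable_def by blast
  have "norm (h z - poly p z) < e" if "z \<in> S" for z
  proof -
    have "norm (h z - poly p z) \<le> norm (h z - h' z) + norm (h' z - poly p z)"
      by (rule norm_diff_triangle_le) auto
    also have "\<dots> < e/2 + e/2" using h' p that by (intro add_le_less_mono) auto
    finally show ?thesis by simp
  qed
  then show "\<exists>p. \<forall>z\<in>S. norm (h z - poly p z) < e" by auto
qed

lemma poly_approximable_add:
  assumes "poly_approximable S h1" "poly_approximable S h2"
  shows "poly_approximable S (\<lambda>z. h1 z + h2 z)"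
  unfolding poly_approximable_def
proof (intro allI impI)
  fix e :: real assume "e > 0"
  then obtain p1 p2 where "\<forall>z\<in>S. norm (h1 z - poly p1 z) < e/2" "\<forall>z\<in>S. norm (h2 z - poly p2 z) < e/2"
    using assms unfolding poly_approximable_def by (meson half_gt_zero)
  then have "\<forall>z\<in>S. norm ((h1 z - poly p1 z) + (h2 z - poly p2 z)) < e/2 + e/2"
    by (blast intro: norm_add_less)
  then have "\<forall>z\<in>S. norm (h1 z + h2 z - poly (p1 + p2) z) < e"
    by (simp add: algebra_simps)
  then show "\<exists>p. \<forall>z\<in>S. norm (h1 z + h2 z - poly p z) < e" ..
qed

lemma poly_approximable_sum:
  "finite I \<Longrightarrow> (\<And>i. i \<in> I \<Longrightarrow> poly_approximable S (h i)) \<Longrightarrow> poly_approximable S (\<lambda>z. \<Sum>i\<in>I. h i z)"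
  by (induction I rule: finite_induct) (auto intro: poly_approximable_add poly_approximable_const)

lemma poly_approximable_imp_bounded:
  assumes "compact S" "poly_approximable S h"
  obtains B where "B > 0" "\<And>z. z \<in> S \<Longrightarrow> norm (h z) \<le> B"
proof -
  obtain p where p: "\<forall>z\<in>S. norm (h z - poly p z) < 1"
    using assms(2) unfolding poly_approximable_def by force
  have "compact (poly p ` S)"
    using assms(1) by (intro compact_continuous_image) (auto intro: continuous_intros)
  then obtain B where B: "B > 0" "\<forall>z\<in>S. norm (poly p z) \<le> B"
    using compact_imp_bounded bounded_pos by (metis image_eqI)
  have "norm (h z) \<le> B + 1" if "z \<in> S" for z
  proof -
    have "norm (h z) \<le> norm (h z - poly p z) + norm (poly p z)"
      by (metis add.commute norm_triangle_sub)
    with p B that show ?thesis by force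
  qed
  with B show thesis by (intro that[of "B + 1"]) auto
qed

lemma poly_approximable_mult:
  assumes S: "compact S" and h1: "poly_approximable S h1" and h2: "poly_approximable S h2"
  shows "poly_approximable S (\<lambda>z. h1 z * h2 z)"
  unfolding poly_approximable_def
proof (intro allI impI)
  fix e :: real assume e: "e > 0"
  obtain B1 where B1: "B1 > 0" "\<And>z. z \<in> S \<Longrightarrow> norm (h1 z) \<le> B1"
    using poly_approximable_imp_bounded[OF S h1] by blast
  obtain B2 where B2: "B2 > 0" "\<And>z. z \<in> S \<Longrightarrow> norm (h2 z) \<le> B2"
    using poly_approximable_imp_bounded[OF S h2] by blast
  define d where "d = min 1 (e / (B1 + B2 + 2))"
  have d: "d > 0" "d \<le> 1" "d * (B1 + B2 + 2) \<le> e"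
    using e B1 B2 unfolding d_def by (auto simp: pos_le_divide_eq[symmetric])
  obtain p1 p2 where p1: "\<forall>z\<in>S. norm (h1 z - poly p1 z) < d" and p2: "\<forall>z\<in>S. norm (h2 z - poly p2 z) < d"
    using h1 h2 d(1) unfolding poly_approximable_def by meson
  have "norm (h1 z * h2 z - poly (p1 * p2) z) < e" if z: "z \<in> S" for z
  proof -
    have "norm (poly p2 z) \<le> norm (h2 z) + norm (h2 z - poly p2 z)"
      by (metis add.commute norm_triangle_sub norm_minus_commute)
    also have "\<dots> \<le> B2 + 1" using B2(2)[OF z] p2 z d(2) by force
    finally have p2_bound: "norm (poly p2 z) \<le> B2 + 1" .
    have "h1 z * h2 z - poly (p1 * p2) z = h1 z * (h2 z - poly p2 z) + (h1 z - poly p1 z) * poly p2 z"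
      by (simp add: algebra_simps)
    then have "norm (h1 z * h2 z - poly (p1 * p2) z)
        \<le> norm (h1 z) * norm (h2 z - poly p2 z) + norm (h1 z - poly p1 z) * norm (poly p2 z)"
      by (metis norm_mult norm_triangle_ineq)
    also have "\<dots> \<le> B1 * d + d * (B2 + 1)"
      using B1 p1 p2 z p2_bound d(1) by (intro add_mono mult_mono) (auto intro: less_imp_le)
    also have "\<dots> < e" using d by (simp add: algebra_simps)
    finally show ?thesis .
  qed
  then show "\<exists>p. \<forall>z\<in>S. norm (h1 z * h2 z - poly p z) < e" by blast
qed

lemma poly_approximable_cmult:
  "compact S \<Longrightarrow> poly_approximable S h \<Longrightarrow> poly_approximable S (\<lambda>z. c * h z)"
  by (rule poly_approximable_mult[OF _ poly_approximable_const])

lemma poly_approximable_power: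
  "compact S \<Longrightarrow> poly_approximable S h \<Longrightarrow> poly_approximable S (\<lambda>z. h z ^ n)"
  by (induction n) (auto intro: poly_approximable_mult poly_approximable_const)

lemma poly_approximable_geometric:
  assumes S: "compact S" and G: "poly_approximable S G" and T: "poly_approximable S T"
    and T_small: "\<And>z. z \<in> S \<Longrightarrow> norm (T z) \<le> 1/2"
  shows "poly_approximable S (\<lambda>z. G z / (1 - T z))"
proof (rule poly_approximable_uniform_limit)
  fix e :: real assume e: "e > 0"
  obtain B where B: "B > 0" "\<And>z. z \<in> S \<Longrightarrow> norm (G z) \<le> B"
    using poly_approximable_imp_bounded[OF S G] by blast
  obtain N where N: "(1/2::real) ^ N < e / (2 * B)"
    using real_arch_pow_inv[of "e / (2 * B)" "1/2"] e B by auto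
  have "norm (G z / (1 - T z) - G z * (\<Sum>n<N. T z ^ n)) \<le> e" if z: "z \<in> S" for z
  proof -
    have T1: "norm (1 - T z) \<ge> 1/2"
      using norm_triangle_ineq2[of 1 "T z"] T_small[OF z] by simp
    then have "T z \<noteq> 1" by auto
    then have geom: "(\<Sum>n<N. T z ^ n) = (1 - T z ^ N) / (1 - T z)"
      by (simp add: sum_gp_strict)
    have "G z / (1 - T z) - G z * (\<Sum>n<N. T z ^ n) = (G z - G z * (1 - T z ^ N)) / (1 - T z)"
      by (simp only: geom times_divide_eq_right diff_divide_distrib[symmetric])
    also have "\<dots> = G z * T z ^ N / (1 - T z)"
      by (simp add: algebra_simps)
    finally have "G z / (1 - T z) - G z * (\<Sum>n<N. T z ^ n) = G z * T z ^ N / (1 - T z)" .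
    then have "norm (G z / (1 - T z) - G z * (\<Sum>n<N. T z ^ n)) = norm (G z) * norm (T z) ^ N / norm (1 - T z)"
      by (simp add: norm_mult norm_divide norm_power)
    also have "\<dots> \<le> B * (1/2) ^ N / (1/2)"
      using B T_small[OF z] T1 z by (intro frac_le mult_mono power_mono) auto
    also have "\<dots> \<le> e" using N B by (simp add: field_simps)
    finally show ?thesis .
  qed
  moreover have "poly_approximable S (\<lambda>z. G z * (\<Sum>n<N. T z ^ n))"
    by (intro poly_approximable_mult[OF S G] poly_approximable_sum poly_approximable_power[OF S T]) auto
  ultimately show "\<exists>h'. poly_approximable S h' \<and> (\<forall>z\<in>S. norm (G z / (1 - T z) - h' z) \<le> e)"
    by blast
qed

lemma poly_approximable_inverse_shift:
  assumes K: "compact K" and w: "w \<notin> K" and approx_w: "poly_approximable K (\<lambda>z. 1 / (w - z))"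
    and w': "norm (w' - w) \<le> infdist w K / 2"
  shows "poly_approximable K (\<lambda>z. 1 / (w' - z))"
proof (cases "K = {}")
  case True then show ?thesis by (simp add: poly_approximable_def)
next
  case False
  have d: "infdist w K > 0"
    using infdist_pos_not_in_closed[OF compact_imp_closed[OF K] False w] .
  have dist_w: "norm (w - z) \<ge> infdist w K" if "z \<in> K" for z
    using infdist_le[OF that, of w] by (simp add: dist_norm)
  have "poly_approximable K (\<lambda>z. (1 / (w - z)) / (1 - (w - w') * (1 / (w - z))))"
  proof (rule poly_approximable_geometric[OF K approx_w])
    show "poly_approximable K (\<lambda>z. (w - w') * (1 / (w - z)))"
      by (rule poly_approximable_cmult[OF K approx_w])
    fix z assume z: "z \<in> K"
    have "norm ((w - w') * (1 / (w - z))) = norm (w' - w) / norm (w - z)"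
      by (simp add: norm_mult norm_divide norm_minus_commute)
    also have "\<dots> \<le> (infdist w K / 2) / infdist w K"
      using w' dist_w[OF z] d by (intro frac_le) auto
    also have "\<dots> = 1/2" using d by simp
    finally show "norm ((w - w') * (1 / (w - z))) \<le> 1/2" .
  qed
  then show ?thesis
  proof (rule poly_approximable_eq)
    fix z assume z: "z \<in> K"
    have "norm (w' - w) < norm (w - z)" using w' dist_w[OF z] d by linarith
    then have "w' - z \<noteq> 0" by (auto simp: norm_minus_commute)
    moreover have "w - z \<noteq> 0" using w z by auto
    ultimately show "1 / (w - z) / (1 - (w - w') * (1 / (w - z))) = 1 / (w' - z)"
      by (simp add: field_simps)
  qed
qed

lemma poly_approximable_inverse_far:
  assumes K: "compact K" and "w \<noteq> 0" and far: "\<And>z. z \<in> K \<Longrightarrow> 2 * norm z \<le> norm w"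
  shows "poly_approximable K (\<lambda>z. 1 / (w - z))"
proof -
  have "poly_approximable K (\<lambda>z. (1/w) / (1 - (1/w) * z))"
  proof (rule poly_approximable_geometric[OF K poly_approximable_const])
    show "poly_approximable K (\<lambda>z. (1/w) * z)"
      by (rule poly_approximable_cmult[OF K poly_approximable_ident])
    show "norm ((1/w) * z) \<le> 1/2" if "z \<in> K" for z
      using far[OF that] \<open>w \<noteq> 0\<close> by (simp add: norm_mult norm_divide field_simps)
  qed
  then show ?thesis
  proof (rule poly_approximable_eq)
    fix z assume z: "z \<in> K"
    then have "w - z \<noteq> 0" using far[OF z] \<open>w \<noteq> 0\<close> by auto
    with \<open>w \<noteq> 0\<close> show "1 / w / (1 - 1 / w * z) = 1 / (w - z)" by (simp add: field_simps)
  qed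
qed

lemma dist_le_half_infdist_in_ball:
  assumes "x \<in> ball a (infdist a K / 5)" "y \<in> ball a (infdist a K / 5)"
  shows "dist y x \<le> infdist x K / 2"
proof -
  have "infdist a K \<le> infdist x K + dist a x" by (rule infdist_triangle)
  then have "infdist x K \<ge> 4 * infdist a K / 5" using assms(1) by (simp add: dist_commute)
  moreover have "dist y x \<le> dist y a + dist a x" by (rule dist_triangle)
  ultimately show ?thesis using assms by (simp add: dist_commute)
qed

lemma poly_approximable_inverse:
  assumes K: "compact K" and conn: "connected (- K)" and w: "w \<notin> K"
  shows "poly_approximable K (\<lambda>z. 1 / (w - z))"
proof (cases "K = {}")
  case True then show ?thesis by (simp add: poly_approximable_def)
next
  case False
  obtain R where R: "R > 0" "\<And>z. z \<in> K \<Longrightarrow> norm z \<le> R"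
    using compact_imp_bounded[OF K] bounded_pos by metis
  define w0 where "w0 = complex_of_real (2 * R + 1)"
  have norm_w0: "norm w0 = 2 * R + 1" using R(1) unfolding w0_def norm_of_real by simp
  then have w0_far: "2 * norm z \<le> norm w0" if "z \<in> K" for z
    using R(2)[OF that] by simp
  have "w0 \<noteq> 0" "w0 \<notin> K" using w0_far[of w0] norm_w0 R(1) by force+
  have closed_K: "closed K" using K by (rule compact_imp_closed)
  \<comment> \<open>Pole pushing: the set of admissible poles is open and closed in the connected set \<open>- K\<close>.\<close>
  show ?thesis
  proof (rule connected_induction_simple[OF conn, where P = "\<lambda>w. poly_approximable K (\<lambda>z. 1 / (w - z))"])
    show "w0 \<in> - K" "w \<in> - K" using \<open>w0 \<notin> K\<close> w by auto
    show "poly_approximable K (\<lambda>z. 1 / (w0 - z))"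
      by (rule poly_approximable_inverse_far[OF K \<open>w0 \<noteq> 0\<close> w0_far])
    fix a assume "a \<in> - K"
    then have "infdist a K > 0" using infdist_pos_not_in_closed[OF closed_K False] by auto
    define B where "B = ball a (infdist a K / 5)"
    have "B \<subseteq> - K"
      using infdist_le[of _ K a] \<open>infdist a K > 0\<close> by (force simp: B_def dist_commute)
    show "\<exists>T. openin (top_of_set (- K)) T \<and> a \<in> T \<and>
        (\<forall>x\<in>T. \<forall>y\<in>T. poly_approximable K (\<lambda>z. 1 / (x - z)) \<longrightarrow> poly_approximable K (\<lambda>z. 1 / (y - z)))"
    proof (intro exI[of _ B] conjI ballI impI)
      show "openin (top_of_set (- K)) B"
        using \<open>B \<subseteq> - K\<close> by (simp add: B_def openin_open_eq open_Compl closed_K)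
      show "a \<in> B" using \<open>infdist a K > 0\<close> by (simp add: B_def)
      fix x y assume "x \<in> B" "y \<in> B" and "poly_approximable K (\<lambda>z. 1 / (x - z))"
      then show "poly_approximable K (\<lambda>z. 1 / (y - z))"
        using poly_approximable_inverse_shift[OF K] dist_le_half_infdist_in_ball[of x a K y] \<open>B \<subseteq> - K\<close>
        by (auto simp: B_def dist_norm)
    qed
  qed
qed

lemma integral_minus_left_endpoint_bound:
  fixes h :: "real \<Rightarrow> complex"
  assumes cont: "continuous_on {a..b} h" and "a \<le> b"
    and close: "\<And>t. t \<in> {a..b} \<Longrightarrow> norm (h t - h a) \<le> e"
  shows "norm (integral {a..b} h - of_real (b - a) * h a) \<le> (b - a) * e"
proof -
  have "e \<ge> 0" using close[of a] \<open>a \<le> b\<close> by (metis atLeastAtMost_iff norm_ge_zero order.trans order_refl)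
  have "(h has_integral integral {a..b} h) {a..b}"
    using integrable_continuous_real[OF cont] by (rule integrable_integral)
  moreover have "((\<lambda>t. h a) has_integral (b - a) *\<^sub>R h a) {a..b}"
    using has_integral_const_real[of "h a" a b] \<open>a \<le> b\<close> by simp
  ultimately have "((\<lambda>t. h t - h a) has_integral (integral {a..b} h - (b - a) *\<^sub>R h a)) {a..b}"
    by (rule has_integral_diff)
  then have "norm (integral {a..b} h - (b - a) *\<^sub>R h a) \<le> e * Henstock_Kurzweil_Integration.content {a..b}"
    by (rule has_integral_bound_real[OF \<open>e \<ge> 0\<close> finite.emptyI]) (use close in auto)
  then show ?thesis using \<open>a \<le> b\<close> by (simp add: scaleR_conv_of_real mult.commute)
qed

lemma integral_unit_interval_split:
  fixes h :: "real \<Rightarrow> complex"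
  assumes cont: "continuous_on {0..1} h" and "M > 0"
  shows "integral {0..1} h = (\<Sum>j<M. integral {real j / M .. real (Suc j) / M} h)"
proof -
  have "integral {0..real k / M} h = (\<Sum>j<k. integral {real j / M .. real (Suc j) / M} h)"
    if "k \<le> M" for k
    using that
  proof (induction k)
    case 0 then show ?case by simp
  next
    case (Suc k)
    have "real (Suc k) / M \<le> 1" using Suc.prems by simp
    then have "integral {0..real k / M} h + integral {real k / M..real (Suc k) / M} h
          = integral {0..real (Suc k) / M} h"
      by (intro Henstock_Kurzweil_Integration.integral_combine integrable_continuous_real
          continuous_on_subset[OF cont]) (auto simp: divide_right_mono)
    then show ?case using Suc by simp
  qed
  from this[of M] show ?thesis using \<open>M > 0\<close> by simp
qed

lemma riemann_sum_error_bound: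
  fixes h :: "real \<Rightarrow> complex"
  assumes cont: "continuous_on {0..1} h" and "M > 0"
    and osc: "\<And>s t. s \<in> {0..1} \<Longrightarrow> t \<in> {0..1} \<Longrightarrow> \<bar>t - s\<bar> \<le> 1 / M \<Longrightarrow> norm (h t - h s) \<le> e"
  shows "norm (integral {0..1} h - (\<Sum>j<M. of_real (1 / M) * h (real j / M))) \<le> e"
proof -
  have piece: "norm (integral {real j / M .. real (Suc j) / M} h - of_real (1 / M) * h (real j / M))
      \<le> (1 / M) * e" if "j < M" for j
  proof -
    have length: "real (Suc j) / M - real j / M = 1 / M" by (simp add: add_divide_distrib)
    have "0 \<le> real j / M" "real j / M \<le> real (Suc j) / M" "real (Suc j) / M \<le> 1"
      using \<open>j < M\<close> by (auto simp: divide_right_mono)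
    then have sub: "{real j / M .. real (Suc j) / M} \<subseteq> {0..1}" and "real j / M \<in> {0..1}" by auto
    have "norm (h t - h (real j / M)) \<le> e" if t: "t \<in> {real j / M .. real (Suc j) / M}" for t
    proof (rule osc)
      show "t \<in> {0..1}" using t sub by blast
      show "\<bar>t - real j / M\<bar> \<le> 1 / M" using t length by auto
    qed fact
    then have "norm (integral {real j / M .. real (Suc j) / M} h
        - of_real (real (Suc j) / M - real j / M) * h (real j / M)) \<le> (real (Suc j) / M - real j / M) * e"
      by (intro integral_minus_left_endpoint_bound continuous_on_subset[OF cont sub])
        (auto simp: divide_right_mono)
    then show ?thesis by (simp only: length)
  qed
  have "norm (integral {0..1} h - (\<Sum>j<M. of_real (1 / M) * h (real j / M)))
      = norm (\<Sum>j<M. integral {real j / M .. real (Suc j) / M} h - of_real (1 / M) * h (real j / M))"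
    using integral_unit_interval_split[OF cont \<open>M > 0\<close>] by (simp add: sum_subtractf)
  also have "\<dots> \<le> (\<Sum>j<M. (1 / M) * e)"
    by (rule order_trans[OF norm_sum sum_mono]) (use piece in auto)
  also have "\<dots> = e" using \<open>M > 0\<close> by simp
  finally show ?thesis .
qed

lemma riemann_sum_uniform_approx:
  fixes \<Phi> :: "real \<Rightarrow> complex \<Rightarrow> complex"
  assumes Z: "compact Z" and cont: "continuous_on ({0..1} \<times> Z) (\<lambda>(t, z). \<Phi> t z)" and "e > 0"
  obtains M where "M > 0"
    "\<And>z. z \<in> Z \<Longrightarrow> norm (integral {0..1} (\<lambda>t. \<Phi> t z) - (\<Sum>j<M. of_real (1 / M) * \<Phi> (real j / M) z)) \<le> e"
proof -
  have "compact ({0..1::real} \<times> Z)" using Z by (intro compact_Times) auto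
  then have "uniformly_continuous_on ({0..1} \<times> Z) (\<lambda>(t, z). \<Phi> t z)"
    using cont compact_uniformly_continuous by blast
  then obtain d where "d > 0" and unif: "\<And>x x'. x \<in> {0..1} \<times> Z \<Longrightarrow> x' \<in> {0..1} \<times> Z \<Longrightarrow>
      dist x' x < d \<Longrightarrow> dist ((\<lambda>(t, z). \<Phi> t z) x') ((\<lambda>(t, z). \<Phi> t z) x) < e"
    unfolding uniformly_continuous_on_def using \<open>e > 0\<close> by metis
  obtain n where n: "inverse (real (Suc n)) < d" using reals_Archimedean[OF \<open>d > 0\<close>] by blast
  define M where "M = Suc n"
  have "M > 0" "1 / real M < d" using n by (auto simp: M_def field_simps)
  have "norm (integral {0..1} (\<lambda>t. \<Phi> t z) - (\<Sum>j<M. of_real (1 / M) * \<Phi> (real j / M) z)) \<le> e"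
    if z: "z \<in> Z" for z
  proof (rule riemann_sum_error_bound[OF _ \<open>M > 0\<close>])
    have "continuous_on {0..1} ((\<lambda>(t, z). \<Phi> t z) \<circ> (\<lambda>t. (t, z)))"
      by (rule continuous_on_compose) (auto intro!: continuous_intros continuous_on_subset[OF cont] simp: z)
    then show "continuous_on {0..1} (\<lambda>t. \<Phi> t z)" by (simp add: o_def)
    fix s t :: real assume "s \<in> {0..1}" "t \<in> {0..1}" "\<bar>t - s\<bar> \<le> 1 / M"
    with \<open>1 / real M < d\<close> z show "norm (\<Phi> t z - \<Phi> s z) \<le> e"
      using unif[of "(s, z)" "(t, z)"] by (auto simp: dist_Pair_Pair dist_real_def dist_norm)
  qed
  with \<open>M > 0\<close> show thesis by (rule that)
qed

lemma poly_approximable_cauchy_integral: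
  fixes A B :: "real \<Rightarrow> complex"
  assumes K: "compact K" and conn: "connected (- K)"
    and cont_A: "continuous_on {0..1} A" and cont_B: "continuous_on {0..1} B"
    and B_notin: "\<And>t. t \<in> {0..1} \<Longrightarrow> B t \<notin> K"
  shows "poly_approximable K (\<lambda>z. integral {0..1} (\<lambda>t. A t / (B t - z)))"
proof (rule poly_approximable_uniform_limit)
  fix e :: real assume "e > 0"
  have "continuous_on ({0..1} \<times> K) (\<lambda>x. A (fst x) / (B (fst x) - snd x))"
    using B_notin
    by (intro continuous_intros continuous_on_compose2[OF cont_A] continuous_on_compose2[OF cont_B])
      (auto simp: mem_Times_iff)
  then obtain M where "M > 0" and riemann: "\<And>z. z \<in> K \<Longrightarrow>
      norm (integral {0..1} (\<lambda>t. A t / (B t - z)) - (\<Sum>j<M. of_real (1 / M) * (A (real j / M) / (B (real j / M) - z)))) \<le> e"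
    using riemann_sum_uniform_approx[OF K _ \<open>e > 0\<close>, of "\<lambda>t z. A t / (B t - z)"]
    by (auto simp: case_prod_beta')
  have "poly_approximable K (\<lambda>z. \<Sum>j<M. of_real (1 / M) * A (real j / M) * (1 / (B (real j / M) - z)))"
    using B_notin
    by (intro poly_approximable_sum poly_approximable_cmult[OF K] poly_approximable_inverse[OF K conn]) auto
  then have "poly_approximable K (\<lambda>z. \<Sum>j<M. of_real (1 / M) * (A (real j / M) / (B (real j / M) - z)))"
    by (rule poly_approximable_eq) simp
  with riemann show "\<exists>h'. poly_approximable K h' \<and> (\<forall>z\<in>K. norm (integral {0..1} (\<lambda>t. A t / (B t - z)) - h' z) \<le> e)"
    by blast
qed

section \<open>Runge's theorem\<close>

lemma compact_Un_inside:
  fixes L :: "complex set"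
  assumes "compact L" shows "compact (L \<union> inside L)"
proof -
  have "closed L" using assms by (rule compact_imp_closed)
  then have "closed (- outside L)" by (intro closed_Compl open_outside)
  moreover have "bounded (L \<union> inside L)" using assms by (simp add: bounded_inside compact_imp_bounded)
  ultimately show ?thesis by (simp add: union_with_inside compact_eq_bounded_closed)
qed

lemma connected_Compl_Un_inside:
  fixes L :: "complex set"
  assumes "bounded L" shows "connected (- (L \<union> inside L))"
  using assms by (simp add: union_with_inside connected_outside)

lemma connected_Compl_disjoint_Union:
  fixes H :: "'i \<Rightarrow> complex set"
  assumes "finite I" "\<And>i. i \<in> I \<Longrightarrow> compact (H i)" "\<And>i. i \<in> I \<Longrightarrow> connected (- H i)"
    "\<And>i j. i \<in> I \<Longrightarrow> j \<in> I \<Longrightarrow> i \<noteq> j \<Longrightarrow> H i \<inter> H j = {}"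
  shows "connected (- \<Union>(H ` I))"
  using assms
proof (induction I rule: finite_induct)
  case empty then show ?case by (simp add: connected_UNIV)
next
  case (insert i I)
  have "connected (- (H i \<union> \<Union>(H ` I)))"
  proof (rule Janiszewski_connected)
    show "closed (\<Union>(H ` I))" using insert by (intro closed_Union) (auto intro: compact_imp_closed)
    have "H i \<inter> \<Union>(H ` I) = {}" using insert.hyps(2) insert.prems(3) by fastforce
    then show "connected (H i \<inter> \<Union>(H ` I))" by simp
  qed (use insert in auto)
  then show ?case by simp
qed

lemma compact_Int_component:
  assumes "compact K" "K \<subseteq> U" "C \<in> components U" shows "compact (K \<inter> C)"
proof -
  obtain T where "closed T" "C = U \<inter> T"
    using closedin_component[OF assms(3)] closedin_closed by metis
  then have "K \<inter> C = K \<inter> T" using assms(2) by blast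
  with \<open>closed T\<close> assms(1) show ?thesis by (simp add: compact_Int_closed)
qed

lemma compact_subset_ball_shrink:
  fixes a :: "'a::metric_space"
  assumes "compact S" "S \<subseteq> ball a R" "0 < R"
  obtains r where "0 < r" "r < R" "S \<subseteq> ball a r"
proof (cases "S = {}")
  case True then show thesis using \<open>0 < R\<close> by (intro that[of "R/2"]) auto
next
  case False
  have "continuous_on S (\<lambda>x. dist a x)" by (intro continuous_intros)
  then obtain x0 where "x0 \<in> S" and max: "\<And>x. x \<in> S \<Longrightarrow> dist a x \<le> dist a x0"
    using continuous_attains_sup[OF assms(1) False] by blast
  then have "dist a x0 < R" using assms(2) by auto
  moreover have "S \<subseteq> ball a ((dist a x0 + R) / 2)"
    using max \<open>dist a x0 < R\<close> by (fastforce simp: subset_iff)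
  ultimately show thesis
    using \<open>0 < R\<close> by (intro that[of "(dist a x0 + R) / 2"]) (auto intro: add_nonneg_pos)
qed

lemma simply_connected_conformal_disc:
  fixes C L :: "complex set"
  assumes C: "open C" "simply_connected C" "C \<noteq> {}" and L: "compact L" "L \<subseteq> C"
  obtains g r where "0 < r" "r < 1" "g holomorphic_on ball 0 1" "inj_on g (ball 0 1)"
    "g ` ball 0 1 \<subseteq> C" "L \<subseteq> g ` ball 0 r"
proof -
  consider "C = UNIV" | f g where "f holomorphic_on C" "g holomorphic_on ball 0 1"
      "\<forall>z\<in>C. f z \<in> ball 0 1 \<and> g (f z) = z" "\<forall>z\<in>ball 0 1. g z \<in> C \<and> f (g z) = z"
    using simply_connected_eq_biholomorphic_to_disc[OF C(1)] C(2,3) by blast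
  then show thesis
  proof cases
    case 1
    obtain R where R: "R > 0" "L \<subseteq> ball 0 R"
      using bounded_subset_ballD[OF compact_imp_bounded[OF L(1)], of 0] by blast
    define g where "g v = of_real (2 * R) * v" for v :: complex
    have "L \<subseteq> g ` ball 0 (1/2)"
    proof
      fix z assume "z \<in> L"
      then have "z = g (z / of_real (2 * R))" "z / of_real (2 * R) \<in> ball 0 (1/2)"
        using R by (auto simp: g_def norm_divide field_simps)
      then show "z \<in> g ` ball 0 (1/2)" by blast
    qed
    moreover have "g holomorphic_on ball 0 1" "inj_on g (ball 0 1)"
      unfolding g_def using R by (auto simp: inj_on_def intro!: holomorphic_intros)
    ultimately show thesis using 1 by (intro that[of "1/2" g]) auto
  next
    case 2
    note fg = 2
    have "compact (f ` L)"
      using L holomorphic_on_imp_continuous_on[OF fg(1)]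
      by (intro compact_continuous_image) (auto intro: continuous_on_subset)
    moreover have "f ` L \<subseteq> ball 0 1" using fg(3) L(2) by auto
    ultimately obtain r where r: "0 < r" "r < 1" "f ` L \<subseteq> ball 0 r"
      by (rule compact_subset_ball_shrink) simp
    have "L \<subseteq> g ` ball 0 r"
    proof
      fix z assume "z \<in> L"
      then have "z = g (f z)" "f z \<in> ball 0 r" using fg(3) L(2) r(3) by auto
      then show "z \<in> g ` ball 0 r" by blast
    qed
    moreover have "inj_on g (ball 0 1)" by (metis fg(4) inj_onI)
    ultimately show thesis using fg r by (intro that[of r g]) auto
  qed
qed

lemma holomorphic_injective_difference_quotient:
  assumes g: "g holomorphic_on S" "open S" "inj_on g S" and "u \<in> S"
  defines "Q \<equiv> \<lambda>v. if v = u then deriv g u else (g v - g u) / (v - u)"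
  shows "Q holomorphic_on S" "\<And>v. v \<in> S \<Longrightarrow> Q v \<noteq> 0"
proof -
  show "Q holomorphic_on S"
    unfolding Q_def using g(2) \<open>u \<in> S\<close> by (intro pole_lemma[OF g(1)]) (simp add: interior_open)
  have "deriv g u \<noteq> 0" by (rule holomorphic_injective_imp_regular[OF g \<open>u \<in> S\<close>])
  moreover have "g v \<noteq> g u" if "v \<in> S" "v \<noteq> u" for v
    using g(3) that \<open>u \<in> S\<close> by (meson inj_onD)
  ultimately show "Q v \<noteq> 0" if "v \<in> S" for v
    using that by (simp add: Q_def)
qed

lemma contour_integral_conformal_circlepath_inside:
  assumes g: "g holomorphic_on ball 0 1" "inj_on g (ball 0 1)" "g ` ball 0 1 \<subseteq> C"
    and F: "F holomorphic_on C" and r: "0 < r" "r < 1" and z: "z \<in> g ` ball 0 r"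
  shows "contour_integral (circlepath 0 r) (\<lambda>v. deriv g v * F (g v) / (g v - z)) = 2 * of_real pi * \<i> * F z"
proof -
  obtain u where u: "u \<in> ball 0 r" "z = g u" using z by blast
  then have "u \<in> ball 0 1" using r by auto
  define Q where "Q v = (if v = u then deriv g u else (g v - g u) / (v - u))" for v
  have Q: "Q holomorphic_on ball 0 1" "\<And>v. v \<in> ball 0 1 \<Longrightarrow> Q v \<noteq> 0"
    using holomorphic_injective_difference_quotient[OF g(1) _ g(2) \<open>u \<in> ball 0 1\<close>]
    unfolding Q_def[abs_def] by auto
  have "(\<lambda>v. F (g v)) holomorphic_on ball 0 1"
    using holomorphic_on_compose_gen[OF g(1) F g(3)] by (simp add: o_def)
  moreover have "deriv g holomorphic_on ball 0 1" by (rule holomorphic_deriv[OF g(1)]) simp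
  ultimately have H: "(\<lambda>v. deriv g v * F (g v) / Q v) holomorphic_on ball 0 1"
    using Q g(1) by (intro holomorphic_intros) auto
  \<comment> \<open>Cauchy's formula for \<open>deriv g v * F (g v) / Q v\<close>; away from \<open>u\<close>, \<open>Q v * (v - u) = g v - z\<close>.\<close>
  have "((\<lambda>v. deriv g v * F (g v) / Q v / (v - u)) has_contour_integral
      2 * of_real pi * \<i> * (deriv g u * F (g u) / Q u)) (circlepath 0 r)"
  proof (rule Cauchy_integral_circlepath)
    show "continuous_on (cball 0 r) (\<lambda>v. deriv g v * F (g v) / Q v)"
      by (rule continuous_on_subset[OF holomorphic_on_imp_continuous_on[OF H]]) (use r in auto)
    show "(\<lambda>v. deriv g v * F (g v) / Q v) holomorphic_on ball 0 r"
      by (rule holomorphic_on_subset[OF H]) (use r in auto)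
  qed (use u in auto)
  moreover have "deriv g u * F (g u) / Q u = F z"
    using Q(2)[OF \<open>u \<in> ball 0 1\<close>] by (simp add: Q_def u(2))
  ultimately have "((\<lambda>v. deriv g v * F (g v) / Q v / (v - u)) has_contour_integral 2 * of_real pi * \<i> * F z)
      (circlepath 0 r)" by simp
  then have "((\<lambda>v. deriv g v * F (g v) / (g v - z)) has_contour_integral 2 * of_real pi * \<i> * F z) (circlepath 0 r)"
  proof (rule has_contour_integral_eq)
    fix v assume "v \<in> path_image (circlepath 0 r)"
    then have "norm v = r" using r by (simp add: path_image_circlepath)
    then have "v \<noteq> u" "v \<in> ball 0 1" using u r by auto
    then have "Q v \<noteq> 0" using Q(2) by blast
    with \<open>v \<noteq> u\<close> have "v - u \<noteq> 0" "g v - g u \<noteq> 0" by (simp_all add: Q_def)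
    then have "D / ((g v - g u) / (v - u)) / (v - u) = D / (g v - g u)" for D
      by (simp add: divide_divide_eq_right)
    with \<open>v \<noteq> u\<close> show "deriv g v * F (g v) / Q v / (v - u) = deriv g v * F (g v) / (g v - z)"
      by (simp add: Q_def u(2))
  qed
  then show ?thesis by (rule contour_integral_unique)
qed

lemma contour_integral_conformal_circlepath_outside:
  assumes g: "g holomorphic_on ball 0 1" "g ` ball 0 1 \<subseteq> C"
    and F: "F holomorphic_on C" and r: "0 < r" "r < 1" and z: "z \<notin> g ` ball 0 1"
  shows "contour_integral (circlepath 0 r) (\<lambda>v. deriv g v * F (g v) / (g v - z)) = 0"
proof -
  have "(\<lambda>v. F (g v)) holomorphic_on ball 0 1"
    using holomorphic_on_compose_gen[OF g(1) F g(2)] by (simp add: o_def)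
  moreover have "deriv g holomorphic_on ball 0 1" by (rule holomorphic_deriv[OF g(1)]) simp
  ultimately have "(\<lambda>v. deriv g v * F (g v) / (g v - z)) holomorphic_on ball 0 1"
    using z by (intro holomorphic_intros g(1)) auto
  then have "((\<lambda>v. deriv g v * F (g v) / (g v - z)) has_contour_integral 0) (circlepath 0 r)"
    using r by (intro Cauchy_theorem_convex_simple) (auto simp: path_image_circlepath)
  then show ?thesis by (rule contour_integral_unique)
qed

lemma poly_approximable_conformal_contour_integral:
  assumes g: "g holomorphic_on ball 0 1" "g ` ball 0 1 \<subseteq> C" and F: "F holomorphic_on C"
    and r: "0 < r" "r < 1" and K: "compact K" "connected (- K)"
    and off_K: "\<And>t. g (circlepath 0 r t) \<notin> K"
  shows "poly_approximable K (\<lambda>z. contour_integral (circlepath 0 r) (\<lambda>v. deriv g v * F (g v) / (g v - z)))"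
proof -
  define c where "c = circlepath 0 r"
  have c_ball: "c t \<in> ball 0 1" for t using r by (simp add: c_def circlepath norm_mult)
  have cont_c: "continuous_on {0..1} c" unfolding c_def by (simp add: circlepath continuous_intros)
  have cont_comp: "continuous_on {0..1} (\<lambda>t. h (c t))" if "h holomorphic_on ball 0 1" for h
    using c_ball by (intro continuous_on_compose2[OF holomorphic_on_imp_continuous_on[OF that] cont_c]) auto
  define A where "A t = deriv g (c t) * F (g (c t)) * (2 * of_real pi * \<i> * r * exp (2 * of_real pi * \<i> * t))"
    for t
  have "deriv g holomorphic_on ball 0 1" by (rule holomorphic_deriv[OF g(1)]) simp
  moreover have "(\<lambda>v. F (g v)) holomorphic_on ball 0 1"
    using holomorphic_on_compose_gen[OF g(1) F g(2)] by (simp add: o_def)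
  ultimately have cont_A: "continuous_on {0..1} A"
    unfolding A_def
    by (intro continuous_on_mult cont_comp continuous_on_const
        continuous_on_exp continuous_on_of_real continuous_on_id)
  have "poly_approximable K (\<lambda>z. integral {0..1} (\<lambda>t. A t / (g (c t) - z)))"
    using off_K by (intro poly_approximable_cauchy_integral[OF K cont_A cont_comp[OF g(1)]]) (simp add: c_def)
  then show ?thesis
  proof (rule poly_approximable_eq)
    show "integral {0..1} (\<lambda>t. A t / (g (c t) - z))
        = contour_integral (circlepath 0 r) (\<lambda>v. deriv g v * F (g v) / (g v - z))" for z
      unfolding contour_integral_integral c_def[symmetric]
      by (rule integral_cong) (simp add: A_def c_def vector_derivative_circlepath field_simps)
  qed
qed

lemma poly_approximable_extend_by_zero:
  fixes C K :: "complex set"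
  assumes C: "open C" "simply_connected C" and f: "f holomorphic_on C"
    and K: "compact K" "connected (- K)" "compact (K \<inter> C)"
  shows "poly_approximable K (\<lambda>z. if z \<in> C then f z else 0)"
proof (cases "C = {}")
  case True then show ?thesis using poly_approximable_const[of K 0] by simp
next
  case False
  obtain g r where r: "0 < r" "r < 1" and g: "g holomorphic_on ball 0 1" "inj_on g (ball 0 1)"
    "g ` ball 0 1 \<subseteq> C" "K \<inter> C \<subseteq> g ` ball 0 r"
    using simply_connected_conformal_disc[OF C False K(3) Int_lower2] .
  define T where "T z = contour_integral (circlepath 0 r) (\<lambda>v. deriv g v * f (g v) / (g v - z))" for z
  have "g (circlepath 0 r t) \<notin> K" for t
  proof
    assume "g (circlepath 0 r t) \<in> K"
    moreover have "norm (circlepath 0 r t) = r" using r by (simp add: circlepath norm_mult)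
    then have "circlepath 0 r t \<in> ball 0 1" "circlepath 0 r t \<notin> ball 0 r" using r by auto
    ultimately have "g (circlepath 0 r t) \<in> g ` ball 0 r" using g(3,4) by blast
    moreover have "ball 0 r \<subseteq> ball 0 1" using r by auto
    ultimately show False
      using inj_on_image_mem_iff[OF g(2) \<open>circlepath 0 r t \<in> ball 0 1\<close>] \<open>circlepath 0 r t \<notin> ball 0 r\<close>
      by blast
  qed
  then have "poly_approximable K T"
    unfolding T_def by (rule poly_approximable_conformal_contour_integral[OF g(1,3) f r K(1,2)])
  then have "poly_approximable K (\<lambda>z. T z / (2 * of_real pi * \<i>))"
    using poly_approximable_cmult[OF K(1), of T "1 / (2 * of_real pi * \<i>)"] by simp
  then show ?thesis
  proof (rule poly_approximable_eq)
    fix z assume "z \<in> K"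
    show "T z / (2 * of_real pi * \<i>) = (if z \<in> C then f z else 0)"
    proof (cases "z \<in> C")
      case True
      with \<open>z \<in> K\<close> g(4) have "z \<in> g ` ball 0 r" by blast
      with True show ?thesis
        by (simp add: T_def contour_integral_conformal_circlepath_inside[OF g(1-3) f r])
    next
      case False
      with g(3) have "z \<notin> g ` ball 0 1" by blast
      with False show ?thesis
        by (simp add: T_def contour_integral_conformal_circlepath_outside[OF g(1,3) f r])
    qed
  qed
qed

theorem Runge_polynomial_approximation:
  fixes U K :: "complex set"
  assumes U: "open U" "\<And>C. C \<in> components U \<Longrightarrow> simply_connected C"
    and f: "f holomorphic_on U" and K: "compact K" "K \<subseteq> U"
  shows "poly_approximable K f"
proof -
  obtain F where F: "F \<subseteq> components U" "finite F" "K \<subseteq> \<Union>F"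
    using compactE[OF K(1), of "components U"] K(2) open_components[OF U(1)] Union_components[of U]
    by metis
  have C: "open C" "simply_connected C" "C \<subseteq> U" if "C \<in> F" for C
    using F(1) that open_components[OF U(1)] U(2) in_components_subset by blast+
  have disjoint: "C \<inter> C' = {}" if "C \<in> F" "C' \<in> F" "C \<noteq> C'" for C C'
    using components_nonoverlap F(1) that by auto
  \<comment> \<open>Filling the holes of \<open>K \<inter> C\<close> inside each component yields a compact \<open>K'\<close> with connected complement.\<close>
  define H where "H C = (K \<inter> C) \<union> inside (K \<inter> C)" for C
  have K_C: "compact (K \<inter> C)" if "C \<in> F" for C
    using compact_Int_component[OF K] F(1) that by auto
  have H: "compact (H C)" "H C \<subseteq> C" "connected (- H C)" if "C \<in> F" for C
  proof -
    show "compact (H C)" unfolding H_def by (rule compact_Un_inside[OF K_C[OF that]])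
    show "connected (- H C)"
      unfolding H_def by (rule connected_Compl_Un_inside[OF compact_imp_bounded[OF K_C[OF that]]])
    show "H C \<subseteq> C"
      using subset_simply_connected_imp_inside_subset[OF C(2,1)[OF that], of "K \<inter> C"] by (auto simp: H_def)
  qed
  define K' where "K' = \<Union>(H ` F)"
  have K'_C: "K' \<inter> C = H C" if "C \<in> F" for C
    using H(2) disjoint that by (fastforce simp: K'_def)
  have "compact K'" unfolding K'_def using F(2) H(1) by (intro compact_Union) auto
  moreover have "connected (- K')" unfolding K'_def
    using H(2) disjoint by (intro connected_Compl_disjoint_Union[OF F(2) H(1) H(3)]) blast+
  ultimately have "poly_approximable K' (\<lambda>z. \<Sum>C\<in>F. if z \<in> C then f z else 0)"
    using F(2) C H(1) K'_C
    by (intro poly_approximable_sum poly_approximable_extend_by_zero holomorphic_on_subset[OF f]) auto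
  moreover have "(\<Sum>C\<in>F. if z \<in> C then f z else 0) = f z" if "z \<in> K'" for z
  proof -
    obtain C0 where "C0 \<in> F" "z \<in> C0" using \<open>z \<in> K'\<close> H(2) by (auto simp: K'_def)
    with disjoint have "F \<inter> {C. z \<in> C} = {C0}" by blast
    then show ?thesis using F(2) by (simp add: sum.If_cases)
  qed
  ultimately have "poly_approximable K' f" by (rule poly_approximable_eq)
  moreover have "K \<subseteq> K'" using F(3) by (auto simp: K'_def H_def)
  ultimately show ?thesis by (rule poly_approximable_subset)
qed

lemma not_poly_approximable_if_contour_integral_nonzero:
  assumes h: "h holomorphic_on S" "open S" "S \<subseteq> K"
    and \<gamma>: "valid_path \<gamma>" "pathfinish \<gamma> = pathstart \<gamma>" "path_image \<gamma> \<subseteq> S"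
    and I: "(h has_contour_integral I) \<gamma>" "I \<noteq> 0"
  shows "\<not> poly_approximable K h"
proof
  obtain B where "B > 0" and B: "\<And>g e. g holomorphic_on S \<Longrightarrow> (\<forall>z\<in>S. norm (g z) \<le> e) \<Longrightarrow>
      norm (contour_integral \<gamma> g) \<le> B * e"
    using contour_integral_bound_exists[OF h(2) \<gamma>(1,3)] by metis
  assume "poly_approximable K h"
  moreover have "norm I / (2 * B) > 0" using I(2) \<open>B > 0\<close> by simp
  ultimately obtain p where p: "\<And>z. z \<in> K \<Longrightarrow> norm (h z - poly p z) < norm I / (2 * B)"
    unfolding poly_approximable_def by blast
  have "((\<lambda>z. poly p z) has_contour_integral 0) \<gamma>"
    using \<gamma> by (intro Cauchy_theorem_convex_simple[of _ UNIV]) (auto intro: holomorphic_intros)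
  then have "contour_integral \<gamma> (\<lambda>z. h z - poly p z) = I"
    using has_contour_integral_diff[OF I(1)] contour_integral_unique by fastforce
  moreover have "norm (contour_integral \<gamma> (\<lambda>z. h z - poly p z)) \<le> B * (norm I / (2 * B))"
    using p h(3) by (intro B holomorphic_intros h(1)) (auto intro: less_imp_le)
  ultimately show False using I(2) \<open>B > 0\<close> by simp
qed

lemma not_simply_connected_component_imp_not_poly_approximable:
  fixes V C :: "complex set"
  assumes V: "open V" and C: "C \<in> components V" and not_sc: "\<not> simply_connected C"
  obtains h K where "h holomorphic_on V" "compact K" "K \<subseteq> V" "\<not> poly_approximable K h"
proof -
  have "open C" "connected C" "C \<subseteq> V"
    using open_components[OF V C] in_components_connected[OF C] in_components_subset[OF C] .
  then obtain \<gamma> F where \<gamma>: "valid_path \<gamma>" "path_image \<gamma> \<subseteq> C" "pathfinish \<gamma> = pathstart \<gamma>"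
    and F: "F holomorphic_on C" and nonzero: "\<not> (F has_contour_integral 0) \<gamma>"
    using simply_connected_eq_contour_integral_zero not_sc by blast
  define I where "I = contour_integral \<gamma> F"
  have has_I: "(F has_contour_integral I) \<gamma>" unfolding I_def
    by (rule has_contour_integral_integral[OF contour_integrable_holomorphic_simple[OF F \<open>open C\<close> \<gamma>(1,2)]])
  with nonzero have "I \<noteq> 0" by auto
  define h where "h z = (if z \<in> C then F z else 0)" for z
  obtain T where "closed T" "C = V \<inter> T"
    using closedin_component[OF C] closedin_closed by metis
  then have "open (V - C)" using V by (simp add: Diff_Int open_Diff)
  then have "h holomorphic_on C \<union> (V - C)"
    unfolding h_def using F \<open>open C\<close> by (intro holomorphic_on_If_Un) (auto intro: holomorphic_intros)
  moreover have "C \<union> (V - C) = V" using \<open>C \<subseteq> V\<close> by auto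
  ultimately have h: "h holomorphic_on V" by simp
  have "compact (path_image \<gamma>)" by (rule compact_path_image[OF valid_path_imp_path[OF \<gamma>(1)]])
  then obtain \<delta> where "\<delta> > 0" and \<delta>: "(\<Union>x\<in>path_image \<gamma>. cball x \<delta>) \<subseteq> C"
    using compact_subset_open_imp_cball_epsilon_subset[OF _ \<open>open C\<close> \<gamma>(2)] by blast
  define K where "K = (\<Union>x\<in>path_image \<gamma>. cball x \<delta>)"
  define S where "S = (\<Union>x\<in>path_image \<gamma>. ball x \<delta>)"
  have "compact K" unfolding K_def by (rule compact_minkowski_sum_cball) fact
  moreover have "K \<subseteq> V" using \<delta> \<open>C \<subseteq> V\<close> by (auto simp: K_def)
  moreover have "\<not> poly_approximable K h"
  proof (rule not_poly_approximable_if_contour_integral_nonzero[OF _ _ _ \<gamma>(1,3)])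
    show "open S" "S \<subseteq> K" "path_image \<gamma> \<subseteq> S" using \<open>\<delta> > 0\<close> by (auto simp: S_def K_def)
    then show "h holomorphic_on S" using h \<open>K \<subseteq> V\<close> by (blast intro: holomorphic_on_subset)
    show "(h has_contour_integral I) \<gamma>"
      by (rule has_contour_integral_eq[OF has_I]) (use \<gamma>(2) in \<open>auto simp: h_def\<close>)
  qed fact
  ultimately show thesis using h that by blast
qed

lemma runge_set_iff_poly_approximable:
  fixes V :: "complex set"
  assumes "open V"
  shows "runge_set V \<longleftrightarrow>
    (\<forall>h K. h holomorphic_on V \<longrightarrow> compact K \<longrightarrow> K \<subseteq> V \<longrightarrow> poly_approximable K h)"
  using Runge_polynomial_approximation[OF assms]
    not_simply_connected_component_imp_not_poly_approximable[OF assms]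
  unfolding runge_set_def by metis

section \<open>Taylor coefficients and density in \<open>F_q(U)\<close>\<close>

lemma higher_deriv_poly: "(deriv ^^ i) (poly p) = poly ((pderiv ^^ i) p)"
proof (induction i)
  case (Suc i)
  have "deriv (poly ((pderiv ^^ i) p)) = poly (pderiv ((pderiv ^^ i) p))"
    by (intro ext DERIV_imp_deriv poly_DERIV)
  then show ?case using Suc by simp
qed simp

lemma higher_deriv_poly_0: "(deriv ^^ i) (poly p) 0 = fact i * coeff p (i::nat)" for p :: "complex poly"
  by (simp add: higher_deriv_poly poly_0_coeff_0 coeff_higher_pderiv pochhammer_fact[symmetric])

lemma poly_sum_monom: "poly (\<Sum>i\<le>N. monom (c i) i) z = (\<Sum>i\<le>N. c i * z ^ i)"
  for c :: "nat \<Rightarrow> 'a::comm_semiring_1"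
  by (simp add: poly_sum poly_monom)

lemma Cauchy_coeff_estimate:
  assumes V: "open V" and F: "F holomorphic_on V" and \<rho>: "0 < \<rho>" "cball 0 \<rho> \<subseteq> V"
    and close: "\<And>z. z \<in> sphere 0 \<rho> \<Longrightarrow> norm (F z - poly p z) \<le> d"
  shows "norm ((deriv ^^ i) F 0 / fact i - coeff p i) \<le> d / \<rho> ^ i"
proof -
  have diff: "(\<lambda>z. F z - poly p z) holomorphic_on V" using F by (intro holomorphic_intros)
  have "norm ((deriv ^^ i) (\<lambda>z. F z - poly p z) 0) \<le> fact i * d / \<rho> ^ i"
    using \<rho> close
    by (intro Cauchy_inequality holomorphic_on_subset[OF diff]
        continuous_on_subset[OF holomorphic_on_imp_continuous_on[OF diff]]) auto
  moreover have "(deriv ^^ i) (\<lambda>z. F z - poly p z) 0 = (deriv ^^ i) F 0 - (deriv ^^ i) (poly p) 0"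
    using \<rho> by (intro higher_deriv_diff[OF F _ V]) (auto intro: holomorphic_intros)
  ultimately have "norm ((deriv ^^ i) F 0 - fact i * coeff p i) \<le> fact i * d / \<rho> ^ i"
    by (simp add: higher_deriv_poly_0)
  moreover have "(deriv ^^ i) F 0 / fact i - coeff p i = ((deriv ^^ i) F 0 - fact i * coeff p i) / fact i"
    by (simp add: field_simps)
  ultimately show ?thesis by (simp add: norm_divide field_simps)
qed

lemma norm_sum_power_le_geometric:
  fixes c :: "nat \<Rightarrow> complex"
  assumes c: "\<And>i. norm (c i) \<le> d / \<rho> ^ i" and "norm z \<le> R" "0 < \<rho>"
  shows "norm (\<Sum>i\<le>N. c i * z ^ i) \<le> d * (\<Sum>i\<le>N. (R / \<rho>) ^ i)"
proof -
  have "norm (c i * z ^ i) \<le> d / \<rho> ^ i * R ^ i" for i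
    unfolding norm_mult norm_power using c[of i] assms(2)
    by (intro mult_mono power_mono) (auto intro: order_trans[OF norm_ge_zero])
  then have "norm (\<Sum>i\<le>N. c i * z ^ i) \<le> (\<Sum>i\<le>N. d / \<rho> ^ i * R ^ i)"
    by (intro order_trans[OF norm_sum sum_mono])
  also have "\<dots> = d * (\<Sum>i\<le>N. (R / \<rho>) ^ i)" by (simp add: sum_distrib_left power_divide)
  finally show ?thesis .
qed

lemma poly_approximation_fixing_taylor_coeffs:
  assumes V: "open V" "0 \<in> V" and F: "F holomorphic_on V" and K: "compact K" "K \<subseteq> V"
    and approx: "\<And>L. compact L \<Longrightarrow> L \<subseteq> V \<Longrightarrow> poly_approximable L F" and "e > 0"
  obtains p where "\<And>i. i \<le> N \<Longrightarrow> coeff p i = (deriv ^^ i) F 0 / fact i"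
    "\<And>z. z \<in> K \<Longrightarrow> norm (F z - poly p z) < e"
proof -
  obtain \<rho> where \<rho>: "0 < \<rho>" "cball 0 \<rho> \<subseteq> V"
    using V unfolding open_contains_cball by blast
  obtain R where R: "R > 0" "\<And>z. z \<in> K \<Longrightarrow> norm z \<le> R"
    using compact_imp_bounded[OF K(1)] bounded_pos by metis
  define B where "B = (\<Sum>i\<le>N. (R / \<rho>) ^ i)"
  have "B \<ge> 0" unfolding B_def using R \<rho> by (intro sum_nonneg) auto
  define d where "d = e / 2 / (1 + B)"
  have "d > 0" using \<open>e > 0\<close> \<open>B \<ge> 0\<close> by (simp add: d_def)
  have "d * (1 + B) = e / 2" using \<open>B \<ge> 0\<close> unfolding d_def by (simp add: divide_eq_eq)
  then have "d + d * B = e / 2" by (simp add: algebra_simps)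
  then have "d + d * B < e" using \<open>e > 0\<close> by simp
  obtain p0 where p0: "\<And>z. z \<in> K \<union> cball 0 \<rho> \<Longrightarrow> norm (F z - poly p0 z) < d"
  proof -
    have "poly_approximable (K \<union> cball 0 \<rho>) F" using K \<rho> by (intro approx) auto
    with \<open>d > 0\<close> show thesis unfolding poly_approximable_def using that by blast
  qed
  define c where "c i = (deriv ^^ i) F 0 / fact i - coeff p0 i" for i
  have c: "norm (c i) \<le> d / \<rho> ^ i" for i
    unfolding c_def using p0 by (intro Cauchy_coeff_estimate[OF V(1) F \<rho>]) (auto intro: less_imp_le)
  define p where "p = p0 + (\<Sum>i\<le>N. monom (c i) i)"
  have "coeff p i = (deriv ^^ i) F 0 / fact i" if "i \<le> N" for i
    using that by (simp add: p_def coeff_sum c_def)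
  moreover have "norm (F z - poly p z) < e" if z: "z \<in> K" for z
  proof -
    have "norm (\<Sum>i\<le>N. c i * z ^ i) \<le> d * B"
      unfolding B_def by (rule norm_sum_power_le_geometric[OF c R(2)[OF z] \<rho>(1)])
    moreover have "F z - poly p z = (F z - poly p0 z) - (\<Sum>i\<le>N. c i * z ^ i)"
      by (simp add: p_def poly_sum_monom)
    ultimately have "norm (F z - poly p z) \<le> norm (F z - poly p0 z) + d * B"
      by (metis add_left_mono norm_triangle_ineq4 order_trans)
    also have "\<dots> < d + d * B" using p0 z by simp
    finally show ?thesis using \<open>d + d * B < e\<close> by simp
  qed
  ultimately show thesis by (rule that)
qed

lemma Fq_swap: "(f, g) \<in> Fq Uy Ux \<Longrightarrow> (g, f) \<in> Fq Ux Uy"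
  unfolding Fq_def by (simp add: eq_commute[of "(deriv ^^ _) (f _) 0 / _"])

lemma img_x_swap: "img_x D (\<lambda>i k. a k i) = img_y D a"
  by (auto simp: img_x_def img_y_def fun_eq_iff)

lemma img_y_swap: "img_y D (\<lambda>i k. a k i) = img_x D a"
  by (auto simp: img_x_def img_y_def fun_eq_iff)

lemma image_dense_swap:
  assumes "image_dense Ux Uy" shows "image_dense Uy Ux"
  unfolding image_dense_def
proof (intro allI impI)
  fix f g N K L and e :: real
  assume fg: "(f, g) \<in> Fq Uy Ux" and KL: "compact K \<and> K \<subseteq> Uy \<and> compact L \<and> L \<subseteq> Ux \<and> e > 0"
  then have "compact L \<and> L \<subseteq> Ux \<and> compact K \<and> K \<subseteq> Uy \<and> e > 0" by blast
  from assms[unfolded image_dense_def, rule_format, OF Fq_swap[OF fg] this, where N = N]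
  obtain D a where "\<forall>k\<le>N. \<forall>z\<in>L. norm (g k z - img_x D a k z) < e"
    "\<forall>i\<le>N. \<forall>w\<in>K. norm (f i w - img_y D a i w) < e"
    by blast
  then show "\<exists>D a. (\<forall>k\<le>N. \<forall>z\<in>K. norm (f k z - img_x D a k z) < e) \<and>
      (\<forall>i\<le>N. \<forall>w\<in>L. norm (g i w - img_y D a i w) < e)"
    using img_x_swap[of D a] img_y_swap[of D a] by (intro exI[of _ D] exI[of _ "\<lambda>i k. a k i"]) simp
qed

lemma image_dense_imp_poly_approximable:
  assumes dense: "image_dense Ux Uy" and h: "h holomorphic_on Ux" and K: "compact K" "K \<subseteq> Ux"
  shows "poly_approximable K h"
  unfolding poly_approximable_def
proof (intro allI impI)
  fix e :: real assume "e > 0"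
  define f where "f n = (if n = 0 then h else (\<lambda>z. 0))" for n :: nat
  define g where "g i = (\<lambda>w::complex. (deriv ^^ i) h 0 / fact i)" for i
  have fg: "(f, g) \<in> Fq Ux Uy"
    unfolding Fq_def
  proof (intro CollectI case_prodI conjI allI)
    show "f n holomorphic_on Ux" "g n holomorphic_on Uy" for n
      using h by (simp_all add: f_def g_def)
    show "(deriv ^^ i) (f k) 0 / of_nat (fact i) = (deriv ^^ k) (g i) 0 / of_nat (fact k)" for i k
      by (cases k) (simp_all add: f_def g_def)
  qed
  have "compact K \<and> K \<subseteq> Ux \<and> compact {} \<and> {} \<subseteq> Uy \<and> e > 0" using K \<open>e > 0\<close> by auto
  from dense[unfolded image_dense_def, rule_format, OF fg this, where N = 0]
  obtain D a where "\<forall>k\<le>0. \<forall>z\<in>K. norm (f k z - img_x D a k z) < e" by blast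
  then have "\<forall>z\<in>K. norm (h z - poly (\<Sum>i\<le>D. monom (a i 0) i) z) < e"
    by (simp add: f_def img_x_def poly_sum_monom)
  then show "\<exists>p. \<forall>z\<in>K. norm (h z - poly p z) < e" ..
qed

lemma poly_eq_sum_coeff_atMost:
  fixes p :: "'a::comm_semiring_1 poly"
  assumes "degree p \<le> D" shows "poly p z = (\<Sum>i\<le>D. coeff p i * z ^ i)"
proof -
  have "(\<Sum>i\<le>D. coeff p i * z ^ i) = (\<Sum>i\<le>degree p. coeff p i * z ^ i)"
    by (rule sum.mono_neutral_right) (use assms in \<open>auto simp: coeff_eq_0\<close>)
  then show ?thesis by (simp add: poly_altdef)
qed

lemma img_glue_polys:
  assumes match: "\<And>i k. i \<le> N \<Longrightarrow> k \<le> N \<Longrightarrow> coeff (P k) i = coeff (Q i) k"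
  obtains D a where "\<And>k z. k \<le> N \<Longrightarrow> img_x D a k z = poly (P k) z"
    "\<And>i w. i \<le> N \<Longrightarrow> img_y D a i w = poly (Q i) w"
proof -
  define a where "a i k = (if k \<le> N then coeff (P k) i else if i \<le> N then coeff (Q i) k else 0)" for i k
  define D where "D = N + (\<Sum>k\<le>N. degree (P k)) + (\<Sum>i\<le>N. degree (Q i))"
  have "N \<le> D" by (simp add: D_def)
  have "degree (P k) \<le> (\<Sum>k\<le>N. degree (P k))" "degree (Q k) \<le> (\<Sum>i\<le>N. degree (Q i))" if "k \<le> N" for k
    using that by (intro member_le_sum; simp)+
  then have deg: "degree (P k) \<le> D" "degree (Q k) \<le> D" if "k \<le> N" for k
    using that unfolding D_def by fastforce+
  have "img_x D a k z = poly (P k) z" if "k \<le> N" for k z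
    using that \<open>N \<le> D\<close> deg(1)[OF that]
    by (simp add: img_x_def a_def poly_eq_sum_coeff_atMost)
  moreover have "img_y D a i w = poly (Q i) w" if "i \<le> N" for i w
  proof -
    have "a i k = coeff (Q i) k" for k
      using that match by (simp add: a_def)
    then show ?thesis
      using that \<open>N \<le> D\<close> deg(2)[OF that] by (simp add: img_y_def poly_eq_sum_coeff_atMost)
  qed
  ultimately show thesis by (rule that)
qed

lemma image_dense_if_runge_sets:
  assumes Ux: "open Ux" "0 \<in> Ux" "runge_set Ux" and Uy: "open Uy" "0 \<in> Uy" "runge_set Uy"
  shows "image_dense Ux Uy"
  unfolding image_dense_def
proof (intro allI impI)
  fix f g N K L and e :: real
  assume "(f, g) \<in> Fq Ux Uy" and KL: "compact K \<and> K \<subseteq> Ux \<and> compact L \<and> L \<subseteq> Uy \<and> e > 0"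
  then have f: "\<And>k. f k holomorphic_on Ux" and g: "\<And>i. g i holomorphic_on Uy"
    and compat: "\<And>i k. (deriv ^^ i) (f k) 0 / fact i = (deriv ^^ k) (g i) 0 / fact k"
    by (auto simp: Fq_def)
  have approx_x: "\<And>h L'. h holomorphic_on Ux \<Longrightarrow> compact L' \<Longrightarrow> L' \<subseteq> Ux \<Longrightarrow> poly_approximable L' h"
    and approx_y: "\<And>h L'. h holomorphic_on Uy \<Longrightarrow> compact L' \<Longrightarrow> L' \<subseteq> Uy \<Longrightarrow> poly_approximable L' h"
    using Ux(3) Uy(3) runge_set_iff_poly_approximable[OF Ux(1)] runge_set_iff_poly_approximable[OF Uy(1)]
    by blast+
  have "\<exists>p. (\<forall>i\<le>N. coeff p i = (deriv ^^ i) (f k) 0 / fact i) \<and> (\<forall>z\<in>K. norm (f k z - poly p z) < e)" for k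
    by (rule poly_approximation_fixing_taylor_coeffs[OF Ux(1,2) f _ _ approx_x[OF f]]) (use KL in auto)
  then obtain P where P_coeff: "\<And>k i. i \<le> N \<Longrightarrow> coeff (P k) i = (deriv ^^ i) (f k) 0 / fact i"
    and P_approx: "\<And>k z. z \<in> K \<Longrightarrow> norm (f k z - poly (P k) z) < e"
    by metis
  have "\<exists>q. (\<forall>k\<le>N. coeff q k = (deriv ^^ k) (g i) 0 / fact k) \<and> (\<forall>w\<in>L. norm (g i w - poly q w) < e)" for i
    by (rule poly_approximation_fixing_taylor_coeffs[where K = L, OF Uy(1,2) g _ _ approx_y[OF g]])
      (use KL in auto)
  then obtain Q where Q_coeff: "\<And>i k. k \<le> N \<Longrightarrow> coeff (Q i) k = (deriv ^^ k) (g i) 0 / fact k"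
    and Q_approx: "\<And>i w. w \<in> L \<Longrightarrow> norm (g i w - poly (Q i) w) < e"
    by metis
  have "coeff (P k) i = coeff (Q i) k" if "i \<le> N" "k \<le> N" for i k
    using P_coeff Q_coeff compat that by simp
  then show "\<exists>D a. (\<forall>k\<le>N. \<forall>z\<in>K. norm (f k z - img_x D a k z) < e) \<and>
      (\<forall>i\<le>N. \<forall>w\<in>L. norm (g i w - img_y D a i w) < e)"
  proof (rule img_glue_polys)
    fix D a assume "\<And>k z. k \<le> N \<Longrightarrow> img_x D a k z = poly (P k) z"
      "\<And>i w. i \<le> N \<Longrightarrow> img_y D a i w = poly (Q i) w"
    with P_approx Q_approx show ?thesis by (intro exI[of _ D] exI[of _ a]) auto
  qed
qed

theorem proposition7p2:
  fixes q :: complex and Ux Uy :: "complex set"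
  assumes "0 < norm q" and "norm q < 1"
    and "q_open q Ux" and "q_open q Uy"
  shows "runge_q_open Ux Uy \<longleftrightarrow> image_dense Ux Uy"
proof -
  have Ux: "open Ux" "0 \<in> Ux" and Uy: "open Uy" "0 \<in> Uy"
    using assms(3,4) by (auto simp: q_open_def)
  show ?thesis
  proof
    assume "runge_q_open Ux Uy"
    then show "image_dense Ux Uy"
      using image_dense_if_runge_sets[OF Ux _ Uy] by (simp add: runge_q_open_def)
  next
    assume dense: "image_dense Ux Uy"
    have "runge_set Ux"
      using image_dense_imp_poly_approximable[OF dense]
      by (simp add: runge_set_iff_poly_approximable[OF Ux(1)])
    moreover have "runge_set Uy"
      using image_dense_imp_poly_approximable[OF image_dense_swap[OF dense]]
      by (simp add: runge_set_iff_poly_approximable[OF Uy(1)])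
    ultimately show "runge_q_open Ux Uy" by (simp add: runge_q_open_def)
  qed
qed

end
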